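(* Let $\pi(\vec{x},y)$ be a Skolem constraint (a finite conjunction of linear arithmetic literals, as defined in the context) and let $\mathit{sk}(\vec{x})$ be the term returned by the procedure $\textsc{ExtractSk}(\vec{x},y,\pi)$ described in the context. Assume that the uninterpreted function $f_{\textsc{rng}}$ occurring in $\mathit{sk}$ is interpreted so that postconditions (P1)–(P5) of the context hold. Then $\mathit{sk}$ is a valid Skolem term for $\pi$: for every valuation of $\vec{x}$ such that $\exists y.\,\pi(\vec{x},y)$ holds, $\pi(\vec{x},\mathit{sk}(\vec{x}))$ holds.
   Context: Work in linear integer arithmetic or linear real arithmetic, with universally quantified variables $\vec{x}$ and a single existentially quantified variable $y$ of sort $T\in\{\mathbb{Z},\mathbb{R}\}$. A Skolem constraint is a conjunction $\pi(\vec{x},y)=\bigwedge_{r\in E\cup D\cup G\cup GE\cup L\cup LE} r(\vec{x},y)$ of literals, each normalized to one of the forms $E=\{y=f_i(\vec{x})\}$, $D=\{y\neq f_i(\vec{x})\}$, $G=\{y>f_i(\vec{x})\}$, $GE=\{y\ge f_i(\vec{x})\}$, $L=\{y<f_i(\vec{x})\}$, $LE=\{y\le f_i(\vec{x})\}$ with $f_i$ linear terms over $\vec{x}$ (over the integers, $A<B$ is rewritten as $A\le B-1$ and $A\ge B$ as $A>B-1$). A term $\mathit{sk}(\vec{x})$ is a valid Skolem term for $\pi$ if $\pi(\vec{x},\mathit{sk}(\vec{x}))$ holds for every $\vec{x}$ with $\exists y.\pi(\vec{x},y)$. Helpers: $\textsc{ASN}(y\sim e(\vec{x}))=e$; $\textsc{MIN}(\{s\})=\textsc{MAX}(\{s\})=\textsc{ASN}(s)$;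 $\textsc{MIN}(S)=\mathit{ite}(\textsc{ASN}(s)\le \textsc{MIN}(S\setminus\{s\}),\textsc{ASN}(s),\textsc{MIN}(S\setminus\{s\}))$ and $\textsc{MAX}(S)=\mathit{ite}(\textsc{ASN}(s)\ge \textsc{MAX}(S\setminus\{s\}),\textsc{ASN}(s),\textsc{MAX}(S\setminus\{s\}))$ for $s\in S$ (symbolic min/max). Uninterpreted random number generator: $f_{\textsc{rng}}(H,\ell_c,u_c,\ell,u)$ takes a collection $H$ of terms, two booleans $\ell_c,u_c$ and two bounds, returning a value of sort $T$; its interpretation must satisfy: (P1) $f_{\textsc{rng}}(H,\cdot)\neq h$ for all $h\in H$; (P2) $f_{\textsc{rng}}(H,\bot,\bot,\ell,u)\in(\ell,u)$; (P3) $f_{\textsc{rng}}(H,\bot,\top,\ell,u)\in(\ell,u]$; (P4) $f_{\textsc{rng}}(H,\top,\bot,\ell,u)\in[\ell,u)$; (P5) $f_{\textsc{rng}}(H,\top,\top,\ell,u)\in[\ell,u]$. Here $-\infty,+\infty$ denote unconstrained bounds. Procedure $\textsc{ExtractSk}(\vec{x},y,\pi)$: set $\ell_{closed}=u_{closed}=\bot$ and $\ell,u$ undefined. If $E\neq\varnothing$, return $\textsc{ASN}(e)$ for some $e\in E$. If $G\cup GE\neq\varnothing$: $\ell:=\textsc{MAX}(G\cup GE)$, $\ell_{closed}:=(G=\varnothing\lor \textsc{MAX}(G)<\textsc{MAX}(GE))$. If $L\cup LE\neq\varnothing$: $u:=\textsc{MIN}(L\cup LE)$, $u_{closed}:=(L=\varnothing\lor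 \textsc{MIN}(L)>\textsc{MIN}(LE))$. If $\ell(\vec{x})=u(\vec{x})$, return $\ell$. Let $H=\{\textsc{ASN}(d)\mid d\in D\}$. If both $\ell,u$ undefined return $f_{\textsc{rng}}(H,\top,\top,-\infty,+\infty)$; if only $\ell$ undefined return $f_{\textsc{rng}}(H,\top,u_{closed},-\infty,u)$; if only $u$ undefined return $f_{\textsc{rng}}(H,\ell_{closed},\top,\ell,+\infty)$; otherwise return $f_{\textsc{rng}}(H,\ell_{closed},u_{closed},\ell,u)$. *)

theory Defs
  imports Main
begin

datatype rel = REq | RNeq | RGt | RGe | RLt | RLe

text \<open>A linear term over the universally quantified variables x_0, x_1, ...:
  a pair (c, [a_0, ..., a_(k-1)]) denoting c + a_0 x_0 + ... + a_(k-1) x_(k-1).\<close>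
type_synonym 'a lin_term = "'a \<times> 'a list"

definition eval_lt :: "'a::linordered_idom lin_term \<Rightarrow> (nat \<Rightarrow> 'a) \<Rightarrow> 'a" where
  "eval_lt t x = fst t + (\<Sum>i<length (snd t). snd t ! i * x i)"

text \<open>A literal (r, f) stands for  y r f(x).\<close>
type_synonym 'a literal = "rel \<times> 'a lin_term"

fun holds_rel :: "rel \<Rightarrow> 'a::linordered_idom \<Rightarrow> 'a \<Rightarrow> bool" where
  "holds_rel REq y v = (y = v)"
| "holds_rel RNeq y v = (y \<noteq> v)"
| "holds_rel RGt y v = (y > v)"
| "holds_rel RGe y v = (y \<ge> v)"
| "holds_rel RLt y v = (y < v)"
| "holds_rel RLe y v = (y \<le> v)"

definition holds_lit :: "'a::linordered_idom literal \<Rightarrow> (nat \<Rightarrow> 'a) \<Rightarrow> 'a \<Rightarrow> bool" where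
  "holds_lit l x y = holds_rel (fst l) y (eval_lt (snd l) x)"

definition sat :: "'a::linordered_idom literal list \<Rightarrow> (nat \<Rightarrow> 'a) \<Rightarrow> 'a \<Rightarrow> bool" where
  "sat \<pi> x y = (\<forall>l\<in>set \<pi>. holds_lit l x y)"

definition valid_skolem :: "'a::linordered_idom literal list \<Rightarrow> ((nat \<Rightarrow> 'a) \<Rightarrow> 'a) \<Rightarrow> bool" where
  "valid_skolem \<pi> sk = (\<forall>x. (\<exists>y. sat \<pi> x y) \<longrightarrow> sat \<pi> x (sk x))"

definition ASN :: "'a::linordered_idom literal \<Rightarrow> (nat \<Rightarrow> 'a) \<Rightarrow> 'a" where
  "ASN l x = eval_lt (snd l) x"

fun MAXv :: "'a::linordered_idom literal list \<Rightarrow> (nat \<Rightarrow> 'a) \<Rightarrow> 'a" where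
  "MAXv [] x = undefined"
| "MAXv [s] x = ASN s x"
| "MAXv (s # S) x = (if ASN s x \<ge> MAXv S x then ASN s x else MAXv S x)"

fun MINv :: "'a::linordered_idom literal list \<Rightarrow> (nat \<Rightarrow> 'a) \<Rightarrow> 'a" where
  "MINv [] x = undefined"
| "MINv [s] x = ASN s x"
| "MINv (s # S) x = (if ASN s x \<le> MINv S x then ASN s x else MINv S x)"

datatype 'a ext = MInf | PInf | Fin 'a

fun above :: "bool \<Rightarrow> 'a::linorder ext \<Rightarrow> 'a \<Rightarrow> bool" where
  "above c MInf v = True"
| "above c PInf v = False"
| "above c (Fin a) v = (if c then a \<le> v else a < v)"

fun below :: "bool \<Rightarrow> 'a::linorder ext \<Rightarrow> 'a \<Rightarrow> bool" where
  "below c PInf v = True"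
| "below c MInf v = False"
| "below c (Fin b) v = (if c then v \<le> b else v < b)"

text \<open>Postconditions (P1)-(P5) for a given call f_rng(H, lc, uc, l, u) with result v:
  v is not in H, and v lies in the interval (l,u), (l,u], [l,u) or [l,u] according to the
  flags lc, uc (infinite bounds are unconstrained).\<close>
definition rng_post :: "'a::linorder list \<Rightarrow> bool \<Rightarrow> bool \<Rightarrow> 'a ext \<Rightarrow> 'a ext \<Rightarrow> 'a \<Rightarrow> bool" where
  "rng_post H lc uc l u v = (v \<notin> set H \<and> above lc l v \<and> below uc u v)"

text \<open>Interpretation of the uninterpreted f_rng: it satisfies (P1)-(P5) for every call
  for which the postconditions are satisfiable at all.\<close>
definition rng_spec :: "('a::linorder list \<Rightarrow> bool \<Rightarrow> bool \<Rightarrow> 'a ext \<Rightarrow> 'a ext \<Rightarrow> 'a) \<Rightarrow> bool" where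
  "rng_spec f = (\<forall>H lc uc l u. (\<exists>v. rng_post H lc uc l u v) \<longrightarrow> rng_post H lc uc l u (f H lc uc l u))"

definition extract_sk ::
  "('a::linordered_idom list \<Rightarrow> bool \<Rightarrow> bool \<Rightarrow> 'a ext \<Rightarrow> 'a ext \<Rightarrow> 'a)
   \<Rightarrow> 'a literal list \<Rightarrow> (nat \<Rightarrow> 'a) \<Rightarrow> 'a" where
  "extract_sk frng \<pi> x =
    (let E = filter (\<lambda>l. fst l = REq) \<pi>;
         D = filter (\<lambda>l. fst l = RNeq) \<pi>;
         G = filter (\<lambda>l. fst l = RGt) \<pi>;
         GE = filter (\<lambda>l. fst l = RGe) \<pi>;
         L = filter (\<lambda>l. fst l = RLt) \<pi>;
         LE = filter (\<lambda>l. fst l = RLe) \<pi>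
     in if E \<noteq> [] then ASN (hd E) x
        else
          let hasl = (G @ GE \<noteq> []);
              hasu = (L @ LE \<noteq> []);
              l = MAXv (G @ GE) x;
              lc = (G = [] \<or> (GE \<noteq> [] \<and> MAXv G x < MAXv GE x));
              u = MINv (L @ LE) x;
              uc = (L = [] \<or> (LE \<noteq> [] \<and> MINv L x > MINv LE x));
              H = map (\<lambda>d. ASN d x) D
          in if hasl \<and> hasu \<and> l = u then l
             else if \<not> hasl \<and> \<not> hasu then frng H True True MInf PInf
             else if \<not> hasl then frng H True uc MInf (Fin u)
             else if \<not> hasu then frng H lc True (Fin l) PInf
             else frng H lc uc (Fin l) (Fin u))"

end

theory Submission
  imports Defs
begin

text \<open>If \<pi> contains an equality literal, every solution equals its right-hand side, which is
  what ExtractSk returns. Otherwise, at a fixed x, the solutions of \<pi> are exactly the values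
  admitted by the postcondition of the call f_rng(H, lc, uc, l, u) that ExtractSk builds: MAX and
  MIN give the tightest bounds and the flags record whether these come from a non-strict literal.
  A solution therefore witnesses that this postcondition is satisfiable, so f_rng meets it; the only
  exception is l = u, where the interval is the single point l and ExtractSk returns l directly.\<close>

definition lits :: "rel \<Rightarrow> 'a literal list \<Rightarrow> 'a literal list" where
  "lits r \<pi> = filter (\<lambda>l. fst l = r) \<pi>"

definition lower_bound :: "'a::linordered_idom literal list \<Rightarrow> (nat \<Rightarrow> 'a) \<Rightarrow> 'a ext" where
  "lower_bound \<pi> x =
    (if lits RGt \<pi> @ lits RGe \<pi> = [] then MInf else Fin (MAXv (lits RGt \<pi> @ lits RGe \<pi>) x))"

text \<open>When a strict and a non-strict lower bound tie, the strict one wins.\<close>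
definition lower_closed :: "'a::linordered_idom literal list \<Rightarrow> (nat \<Rightarrow> 'a) \<Rightarrow> bool" where
  "lower_closed \<pi> x =
    (lits RGt \<pi> = [] \<or> (lits RGe \<pi> \<noteq> [] \<and> MAXv (lits RGt \<pi>) x < MAXv (lits RGe \<pi>) x))"

definition upper_bound :: "'a::linordered_idom literal list \<Rightarrow> (nat \<Rightarrow> 'a) \<Rightarrow> 'a ext" where
  "upper_bound \<pi> x =
    (if lits RLt \<pi> @ lits RLe \<pi> = [] then PInf else Fin (MINv (lits RLt \<pi> @ lits RLe \<pi>) x))"

definition upper_closed :: "'a::linordered_idom literal list \<Rightarrow> (nat \<Rightarrow> 'a) \<Rightarrow> bool" where
  "upper_closed \<pi> x =
    (lits RLt \<pi> = [] \<or> (lits RLe \<pi> \<noteq> [] \<and> MINv (lits RLt \<pi>) x > MINv (lits RLe \<pi>) x))"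

definition disequalities :: "'a::linordered_idom literal list \<Rightarrow> (nat \<Rightarrow> 'a) \<Rightarrow> 'a list" where
  "disequalities \<pi> x = map (\<lambda>d. ASN d x) (lits RNeq \<pi>)"

lemma MAXv_eq_Max: "S \<noteq> [] \<Longrightarrow> MAXv S x = Max ((\<lambda>s. ASN s x) ` set S)"
proof (induction S rule: list_nonempty_induct)
  case (cons s S)
  have "MAXv (s # S) x = max (ASN s x) (MAXv S x)"
    using \<open>S \<noteq> []\<close> by (cases S) (auto simp: max_def)
  with cons show ?case by simp
qed simp

lemma MINv_eq_Min: "S \<noteq> [] \<Longrightarrow> MINv S x = Min ((\<lambda>s. ASN s x) ` set S)"
proof (induction S rule: list_nonempty_induct)
  case (cons s S)
  have "MINv (s # S) x = min (ASN s x) (MINv S x)"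
    using \<open>S \<noteq> []\<close> by (cases S) (auto simp: min_def)
  with cons show ?case by simp
qed simp

lemma MAXv_le_iff: "S \<noteq> [] \<Longrightarrow> MAXv S x \<le> v \<longleftrightarrow> (\<forall>s\<in>set S. ASN s x \<le> v)"
  by (simp add: MAXv_eq_Max)

lemma MAXv_less_iff: "S \<noteq> [] \<Longrightarrow> MAXv S x < v \<longleftrightarrow> (\<forall>s\<in>set S. ASN s x < v)"
  by (simp add: MAXv_eq_Max)

lemma MINv_ge_iff: "S \<noteq> [] \<Longrightarrow> v \<le> MINv S x \<longleftrightarrow> (\<forall>s\<in>set S. v \<le> ASN s x)"
  by (simp add: MINv_eq_Min)

lemma MINv_greater_iff: "S \<noteq> [] \<Longrightarrow> v < MINv S x \<longleftrightarrow> (\<forall>s\<in>set S. v < ASN s x)"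
  by (simp add: MINv_eq_Min)

lemma MAXv_append:
  "S \<noteq> [] \<Longrightarrow> T \<noteq> [] \<Longrightarrow> MAXv (S @ T) x = max (MAXv S x) (MAXv T x)"
  by (simp add: MAXv_eq_Max image_Un Max_Un)

lemma MINv_append:
  "S \<noteq> [] \<Longrightarrow> T \<noteq> [] \<Longrightarrow> MINv (S @ T) x = min (MINv S x) (MINv T x)"
  by (simp add: MINv_eq_Min image_Un Min_Un)

lemma sat_iff_lits: "sat \<pi> x v \<longleftrightarrow> (\<forall>r. \<forall>l\<in>set (lits r \<pi>). holds_rel r v (ASN l x))"
  by (auto simp: sat_def holds_lit_def ASN_def lits_def)

lemma above_lower_bound_iff:
  "above (lower_closed \<pi> x) (lower_bound \<pi> x) v \<longleftrightarrow>
     (\<forall>l\<in>set (lits RGt \<pi>). ASN l x < v) \<and> (\<forall>l\<in>set (lits RGe \<pi>). ASN l x \<le> v)"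
proof (cases "lits RGt \<pi> = []"; cases "lits RGe \<pi> = []")
  assume "lits RGt \<pi> \<noteq> []" "lits RGe \<pi> \<noteq> []"
  then show ?thesis
    by (auto simp: lower_bound_def lower_closed_def MAXv_append max_def
        simp flip: MAXv_le_iff MAXv_less_iff)
qed (auto simp: lower_bound_def lower_closed_def MAXv_le_iff MAXv_less_iff)

lemma below_upper_bound_iff:
  "below (upper_closed \<pi> x) (upper_bound \<pi> x) v \<longleftrightarrow>
     (\<forall>l\<in>set (lits RLt \<pi>). v < ASN l x) \<and> (\<forall>l\<in>set (lits RLe \<pi>). v \<le> ASN l x)"
proof (cases "lits RLt \<pi> = []"; cases "lits RLe \<pi> = []")
  assume "lits RLt \<pi> \<noteq> []" "lits RLe \<pi> \<noteq> []"
  then show ?thesis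
    by (auto simp: upper_bound_def upper_closed_def MINv_append min_def
        simp flip: MINv_ge_iff MINv_greater_iff)
qed (auto simp: upper_bound_def upper_closed_def MINv_ge_iff MINv_greater_iff)

lemma sat_iff_rng_post:
  assumes "lits REq \<pi> = []"
  shows "sat \<pi> x v \<longleftrightarrow> rng_post (disequalities \<pi> x) (lower_closed \<pi> x) (upper_closed \<pi> x)
                          (lower_bound \<pi> x) (upper_bound \<pi> x) v"
proof -
  have all_rel: "(\<forall>r. P r) \<longleftrightarrow> P REq \<and> P RNeq \<and> P RGt \<and> P RGe \<and> P RLt \<and> P RLe" for P
    by (metis rel.exhaust)
  show ?thesis
    using assms
    by (auto simp: sat_iff_lits all_rel rng_post_def disequalities_def
        above_lower_bound_iff below_upper_bound_iff)
qed

lemma rng_post_point: "rng_post H lc uc b b v \<Longrightarrow> b = Fin v"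
  by (cases b; cases lc; cases uc) (auto simp: rng_post_def)

lemma extract_sk_REq:
  "lits REq \<pi> \<noteq> [] \<Longrightarrow> extract_sk frng \<pi> x = ASN (hd (lits REq \<pi>)) x"
  by (simp add: extract_sk_def lits_def)

lemma extract_sk_point:
  "lits REq \<pi> = [] \<Longrightarrow> lower_bound \<pi> x = Fin c \<Longrightarrow> upper_bound \<pi> x = Fin c \<Longrightarrow>
    extract_sk frng \<pi> x = c"
  by (auto simp: extract_sk_def Let_def lits_def lower_bound_def upper_bound_def split: if_splits)

lemma extract_sk_rng:
  "lits REq \<pi> = [] \<Longrightarrow> lower_bound \<pi> x \<noteq> upper_bound \<pi> x \<Longrightarrow>
    extract_sk frng \<pi> x = frng (disequalities \<pi> x) (lower_closed \<pi> x) (upper_closed \<pi> x)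
                                (lower_bound \<pi> x) (upper_bound \<pi> x)"
  by (auto simp: extract_sk_def Let_def lits_def lower_bound_def upper_bound_def
      lower_closed_def upper_closed_def disequalities_def)

lemma extract_sk_sat_REq:
  assumes "lits REq \<pi> \<noteq> []" and "sat \<pi> x y"
  shows "sat \<pi> x (extract_sk frng \<pi> x)"
proof -
  have "y = ASN (hd (lits REq \<pi>)) x"
    using assms hd_in_set[OF assms(1)] unfolding sat_iff_lits by (metis holds_rel.simps(1))
  with assms show ?thesis by (simp add: extract_sk_REq)
qed

lemma extract_sk_sat_no_REq:
  assumes "rng_spec frng" and no_eq: "lits REq \<pi> = []" and "sat \<pi> x y"
  shows "sat \<pi> x (extract_sk frng \<pi> x)"
proof -
  let ?post = "rng_post (disequalities \<pi> x) (lower_closed \<pi> x) (upper_closed \<pi> x)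
                        (lower_bound \<pi> x) (upper_bound \<pi> x)"
  have "?post y" using \<open>sat \<pi> x y\<close> sat_iff_rng_post[OF no_eq] by blast
  show ?thesis
  proof (cases "lower_bound \<pi> x = upper_bound \<pi> x")
    case True
    with \<open>?post y\<close> have "lower_bound \<pi> x = Fin y" "upper_bound \<pi> x = Fin y"
      by (metis rng_post_point)+
    with \<open>sat \<pi> x y\<close> no_eq show ?thesis by (simp add: extract_sk_point)
  next
    case False
    have "?post (extract_sk frng \<pi> x)"
      unfolding extract_sk_rng[OF no_eq False]
      using \<open>rng_spec frng\<close> \<open>?post y\<close> unfolding rng_spec_def by blast
    with no_eq show ?thesis by (simp add: sat_iff_rng_post)
  qed
qed

theorem mainTheorem1:
  fixes frng :: "'a::linordered_idom list \<Rightarrow> bool \<Rightarrow> bool \<Rightarrow> 'a ext \<Rightarrow> 'a ext \<Rightarrow> 'a"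
    and \<pi> :: "'a literal list"
  assumes "rng_spec frng"
  shows "valid_skolem \<pi> (extract_sk frng \<pi>)"
  unfolding valid_skolem_def
  using extract_sk_sat_REq extract_sk_sat_no_REq[OF assms] by blast

end
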